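(* Let $V\subset\mathbb{R}^d$ be a finite non-degenerate antichain and let $p\in S_V$ be a characteristic point. Then every minimum $v\in D_p$ is contained in some minimal generating set of $p$.
   Context: For $x,y\in\mathbb{R}^d$, $x\le y$ (dominance order) means $x_i\le y_i$ for all $i$; $y\rhd x$ means $y_i>x_i$ for all $i$; $y\rhd_i x$ means $y_i=x_i$ and $y_j>x_j$ for all $j\neq i$. The join is the componentwise maximum. $V\subset\mathbb{R}^d$ is a finite antichain in the dominance order (elements are called minima). The orthogonal surface $S_V$ is the topological boundary of $\langle V\rangle=\{x: x\ge v\text{ for some }v\in V\}$; equivalently $p\in S_V$ iff there is $v\in V$ with $v\le p$ and no $w\in V$ with $p\rhd w$. For $p\in S_V$, $D_p=\{v\in V:v\le p\}$. A generating set for $p\in S_V$ is a nonempty $G\subseteq D_p$ with $\bigvee G=p$; it is minimal if $\bigvee(G\setminus\{v\})\neq p$ for every $v\in G$. Flats: $U_i(v)=\{p\in S_V: p\rhd_i v\}$; for $v,w\in V$ put $v\sim_i w$ iff $U_i(v)\cap U_i(w)\neq\emptyset$, and let $\sim_i^c$ be the reflexive–transitive closure; the $i$-flat of $v$ is $F_i(v)=\overline{\bigcup_{w\sim_i^c v}U_i(w)}$, and an $i$-flat is any set of this form. A characteristic point is a point of $S_V$ that lies in some $i$-flat for every $i\in\{1,\dots,d\}$. $V$ is degenerate if there exist a characteristic point $p$, minima $x,u,v\in D_p$ and coordinates $i\neq j$ with $u_i<v_i=x_i=p_i$ and $v_j<u_j=x_j=p_j$; otherwise non-degenerate. *)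

theory Defs
  imports "HOL-Analysis.Analysis"
begin

definition dom_le :: "real ^ 'd \<Rightarrow> real ^ 'd \<Rightarrow> bool" where
  "dom_le x y \<longleftrightarrow> (\<forall>i. x $ i \<le> y $ i)"

definition dom_gt :: "real ^ 'd \<Rightarrow> real ^ 'd \<Rightarrow> bool" where
  "dom_gt y x \<longleftrightarrow> (\<forall>i. y $ i > x $ i)"

definition dom_gt_i :: "real ^ 'd \<Rightarrow> 'd \<Rightarrow> real ^ 'd \<Rightarrow> bool" where
  "dom_gt_i y i x \<longleftrightarrow> y $ i = x $ i \<and> (\<forall>j. j \<noteq> i \<longrightarrow> y $ j > x $ j)"

definition antichain :: "(real ^ 'd) set \<Rightarrow> bool" where
  "antichain V \<longleftrightarrow> (\<forall>v\<in>V. \<forall>w\<in>V. dom_le v w \<longrightarrow> v = w)"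

definition join :: "(real ^ 'd) set \<Rightarrow> real ^ 'd" where
  "join G = (\<chi> i. Max ((\<lambda>v. v $ i) ` G))"

definition orth_surface :: "(real ^ 'd) set \<Rightarrow> (real ^ 'd) set" where
  "orth_surface V = {p. (\<exists>v\<in>V. dom_le v p) \<and> \<not> (\<exists>w\<in>V. dom_gt p w)}"

definition Dset :: "(real ^ 'd) set \<Rightarrow> real ^ 'd \<Rightarrow> (real ^ 'd) set" where
  "Dset V p = {v\<in>V. dom_le v p}"

definition generating_set :: "(real ^ 'd) set \<Rightarrow> real ^ 'd \<Rightarrow> (real ^ 'd) set \<Rightarrow> bool" where
  "generating_set V p G \<longleftrightarrow> G \<noteq> {} \<and> G \<subseteq> Dset V p \<and> join G = p"

text \<open>Minimality: removing any element gives a set whose join is not p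
  (the join of the empty set is never p, by convention).\<close>
definition minimal_generating_set :: "(real ^ 'd) set \<Rightarrow> real ^ 'd \<Rightarrow> (real ^ 'd) set \<Rightarrow> bool" where
  "minimal_generating_set V p G \<longleftrightarrow> generating_set V p G \<and>
     (\<forall>v\<in>G. G - {v} \<noteq> {} \<longrightarrow> join (G - {v}) \<noteq> p)"

definition Uflat :: "(real ^ 'd) set \<Rightarrow> 'd \<Rightarrow> real ^ 'd \<Rightarrow> (real ^ 'd) set" where
  "Uflat V i v = {p \<in> orth_surface V. dom_gt_i p i v}"

definition sim_rel :: "(real ^ 'd) set \<Rightarrow> 'd \<Rightarrow> ((real ^ 'd) \<times> (real ^ 'd)) set" where
  "sim_rel V i = {(v, w). v \<in> V \<and> w \<in> V \<and> Uflat V i v \<inter> Uflat V i w \<noteq> {}}"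

definition Fflat :: "(real ^ 'd) set \<Rightarrow> 'd \<Rightarrow> real ^ 'd \<Rightarrow> (real ^ 'd) set" where
  "Fflat V i v = closure (\<Union>{Uflat V i w | w. (v, w) \<in> (sim_rel V i)\<^sup>*})"

definition is_flat :: "(real ^ 'd) set \<Rightarrow> 'd \<Rightarrow> (real ^ 'd) set \<Rightarrow> bool" where
  "is_flat V i F \<longleftrightarrow> (\<exists>v\<in>V. F = Fflat V i v)"

definition characteristic_point :: "(real ^ 'd) set \<Rightarrow> real ^ 'd \<Rightarrow> bool" where
  "characteristic_point V p \<longleftrightarrow> p \<in> orth_surface V \<and>
     (\<forall>i. \<exists>F. is_flat V i F \<and> p \<in> F)"

definition degenerate :: "(real ^ 'd) set \<Rightarrow> bool" where
  "degenerate V \<longleftrightarrow> (\<exists>p x u v i j. characteristic_point V p \<and>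
     x \<in> Dset V p \<and> u \<in> Dset V p \<and> v \<in> Dset V p \<and> i \<noteq> j \<and>
     u $ i < v $ i \<and> v $ i = x $ i \<and> x $ i = p $ i \<and>
     v $ j < u $ j \<and> u $ j = x $ j \<and> x $ j = p $ j)"

end

theory Submission
  imports Defs
begin

text \<open>Call coordinate i of a minimum u \<in> D_p tight if u_i = p_i; a set G \<subseteq> D_p generates p
  exactly when every coordinate is tight for some member of G. Near a characteristic point p,
  the i-flat through p supplies a minimum w that is tight at i and tight at some coordinate of
  every minimum that is not tight at i. Choose a tight coordinate i of v with the fewest minima
  tight there. Non-degeneracy then yields, for each coordinate j not tight for v, a minimum
  tight at j but not at i. Together with v these minima generate p, and v is the only one of
  them tight at i (i is private to v), so every minimal generating set inside them contains v.\<close>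

lemma join_eq_iff_tight:
  fixes G :: "(real ^ 'd) set"
  assumes "finite G" "G \<noteq> {}" "\<forall>g\<in>G. dom_le g p"
  shows "join G = p \<longleftrightarrow> (\<forall>k. \<exists>g\<in>G. g $ k = p $ k)"
proof -
  have "join G $ k = p $ k \<longleftrightarrow> (\<exists>g\<in>G. g $ k = p $ k)" for k
    using assms by (auto simp: join_def dom_le_def Max_eq_iff image_iff) metis
  then show ?thesis
    by (auto simp: vec_eq_iff)
qed

lemma generating_set_contains_minimal:
  assumes "finite G" "generating_set V p G"
  shows "\<exists>H\<subseteq>G. minimal_generating_set V p H"
proof -
  obtain H where H: "H \<subseteq> G" "generating_set V p H"
    and least: "\<And>H'. H' \<subseteq> G \<Longrightarrow> generating_set V p H' \<Longrightarrow> card H \<le> card H'"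
    using ex_has_least_nat[of "\<lambda>H. H \<subseteq> G \<and> generating_set V p H" G card] assms(2) by blast
  have "minimal_generating_set V p H"
    unfolding minimal_generating_set_def
  proof (intro conjI ballI impI H(2))
    fix w assume w: "w \<in> H" "H - {w} \<noteq> {}"
    show "join (H - {w}) \<noteq> p"
    proof
      assume "join (H - {w}) = p"
      then have "generating_set V p (H - {w})"
        using H(2) w(2) by (auto simp: generating_set_def)
      then have "card H \<le> card (H - {w})"
        using least H(1) by blast
      moreover have "card (H - {w}) < card H"
        using w(1) H(1) assms(1) by (meson card_Diff1_less finite_subset)
      ultimately show False by simp
    qed
  qed
  then show ?thesis using H(1) by blast
qed

lemma Dset_has_tight_coordinate:
  assumes "p \<in> orth_surface V" "v \<in> Dset V p"
  shows "\<exists>k. v $ k = p $ k"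
proof -
  have "\<not> dom_gt p v"
    using assms by (auto simp: orth_surface_def Dset_def)
  then obtain k where "p $ k \<le> v $ k"
    by (auto simp: dom_gt_def not_less)
  moreover have "v $ k \<le> p $ k"
    using assms(2) by (simp add: Dset_def dom_le_def)
  ultimately show ?thesis by (intro exI[of _ k]) simp
qed

lemma degenerateI:
  assumes "characteristic_point V p" "x \<in> Dset V p" "u \<in> Dset V p" "v \<in> Dset V p" "i \<noteq> j"
    and "u $ i < v $ i" "v $ i = x $ i" "x $ i = p $ i"
    and "v $ j < u $ j" "u $ j = x $ j" "x $ j = p $ j"
  shows "degenerate V"
  unfolding degenerate_def by (intro exI conjI) (rule assms)+

lemma finite_coordinate_gap:
  fixes V :: "(real ^ 'd) set"
  assumes "finite V"
  shows "\<exists>\<delta>>0. \<forall>x\<in>V. \<forall>k. x $ k \<noteq> p $ k \<longrightarrow> \<delta> \<le> \<bar>x $ k - p $ k\<bar>"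
proof -
  have "finite ((\<lambda>(x, k). x $ k - p $ k) ` (V \<times> UNIV))"
    using assms by simp
  from finite_set_avoid[OF this, of 0] show ?thesis
    by (fastforce simp: dist_real_def)
qed

text \<open>V has finitely many coordinate values, so a point q of U_i(w) close enough to p forces
  w \<le> p with w_i = p_i, and every minimum not strictly below q is tight where q exceeds w.\<close>

lemma characteristic_point_flat_witness:
  fixes V :: "(real ^ 'd) set"
  assumes "finite V" "characteristic_point V p"
  shows "\<exists>w\<in>Dset V p. w $ i = p $ i \<and>
           (\<forall>y\<in>Dset V p. y $ i < p $ i \<longrightarrow> (\<exists>j. y $ j = p $ j \<and> w $ j < p $ j))"
proof -
  obtain v0 where v0: "v0 \<in> V" "p \<in> Fflat V i v0"
    using assms(2) by (auto simp: characteristic_point_def is_flat_def)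
  obtain \<delta> where \<delta>: "\<delta> > 0"
    and gap: "\<And>x k. x \<in> V \<Longrightarrow> x $ k \<noteq> p $ k \<Longrightarrow> \<delta> \<le> \<bar>x $ k - p $ k\<bar>"
    using finite_coordinate_gap[OF assms(1)] by blast
  have snap: "x $ k = p $ k" if "x \<in> V" "\<bar>x $ k - p $ k\<bar> < \<delta>" for x k
    using gap[of x k] that by fastforce
  obtain q where "q \<in> \<Union>{Uflat V i w | w. (v0, w) \<in> (sim_rel V i)\<^sup>*}" and "dist q p < \<delta>"
    using v0(2) \<delta> closure_approachable unfolding Fflat_def by blast
  then obtain w where q_surface: "q \<in> orth_surface V" and q_flat: "dom_gt_i q i w"
    and w_chain: "(v0, w) \<in> (sim_rel V i)\<^sup>*"
    by (auto simp: Uflat_def)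
  have near: "\<bar>q $ k - p $ k\<bar> < \<delta>" for k
    using dist_vec_nth_le[of q k p] \<open>dist q p < \<delta>\<close> by (simp add: dist_real_def)
  have wV: "w \<in> V"
    using w_chain v0(1) by (cases rule: rtranclE) (auto simp: sim_rel_def)
  have qi: "q $ i = w $ i" and qj: "\<And>j. j \<noteq> i \<Longrightarrow> w $ j < q $ j"
    using q_flat by (auto simp: dom_gt_i_def)
  have wi: "w $ i = p $ i"
    using snap[OF wV, of i] near[of i] qi by simp
  have "w $ k \<le> p $ k" for k
  proof (rule ccontr)
    assume "\<not> w $ k \<le> p $ k"
    moreover have "k \<noteq> i" using calculation wi by auto
    ultimately have "\<bar>w $ k - p $ k\<bar> < \<delta>" using qj[of k] near[of k] by auto
    with snap[OF wV, of k] \<open>\<not> w $ k \<le> p $ k\<close> show False by simp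
  qed
  then have wD: "w \<in> Dset V p"
    using wV by (simp add: Dset_def dom_le_def)
  have "\<exists>j. y $ j = p $ j \<and> w $ j < p $ j" if y: "y \<in> Dset V p" "y $ i < p $ i" for y
  proof -
    have yV: "y \<in> V" and y_le: "\<And>k. y $ k \<le> p $ k"
      using y(1) by (auto simp: Dset_def dom_le_def)
    have "\<not> dom_gt q y"
      using q_surface yV by (auto simp: orth_surface_def)
    then obtain j where j: "q $ j \<le> y $ j"
      by (auto simp: dom_gt_def not_less)
    have "j \<noteq> i" using j y(2) qi wi by auto
    have "y $ j = p $ j"
      using snap[OF yV, of j] j y_le[of j] near[of j] by simp
    moreover have "w $ j < p $ j"
      using qj[OF \<open>j \<noteq> i\<close>] j calculation by simp
    ultimately show ?thesis by blast
  qed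
  with wD wi show ?thesis by blast
qed

lemma nondegenerate_private_coordinate:
  fixes V :: "(real ^ 'd) set"
  assumes "finite V" "\<not> degenerate V" "characteristic_point V p" "v \<in> Dset V p"
  shows "\<exists>i. v $ i = p $ i \<and>
           (\<forall>j. v $ j < p $ j \<longrightarrow> (\<exists>c\<in>Dset V p. c $ j = p $ j \<and> c $ i < p $ i))"
proof -
  define A where "A k = {u \<in> Dset V p. u $ k = p $ k}" for k
  have below: "\<And>u k. u \<in> Dset V p \<Longrightarrow> u $ k \<le> p $ k"
    by (simp add: Dset_def dom_le_def)
  obtain k0 where "v $ k0 = p $ k0"
    using Dset_has_tight_coordinate assms(3,4) characteristic_point_def by blast
  then obtain i where i: "v $ i = p $ i"
    and fewest: "\<And>k. v $ k = p $ k \<Longrightarrow> card (A i) \<le> card (A k)"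
    using ex_has_least_nat[of "\<lambda>k. v $ k = p $ k" k0 "\<lambda>k. card (A k)"] by blast
  have "\<exists>c\<in>Dset V p. c $ j = p $ j \<and> c $ i < p $ i" if vj: "v $ j < p $ j" for j
  proof (rule ccontr)
    assume no_c: "\<not> ?thesis"
    obtain w where w: "w \<in> Dset V p" "w $ j = p $ j"
      and sep: "\<forall>y\<in>Dset V p. y $ j < p $ j \<longrightarrow> (\<exists>k. y $ k = p $ k \<and> w $ k < p $ k)"
      using characteristic_point_flat_witness[OF assms(1,3)] by blast
    have wi: "w $ i = p $ i"
      using no_c w below[of w i] by force
    obtain k where k: "v $ k = p $ k" "w $ k < p $ k"
      using sep assms(4) vj by blast
    have "i \<noteq> k" using wi k(2) by auto
    have "A k \<subseteq> A i"
    proof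
      fix u assume u: "u \<in> A k"
      show "u \<in> A i"
      proof (rule ccontr)
        assume "u \<notin> A i"
        then have "u $ i < p $ i" using u below[of u i] by (auto simp: A_def)
        then have "degenerate V"
          using degenerateI[of V p v u w i k] assms(3,4) w(1) wi k i \<open>i \<noteq> k\<close> u
          by (simp add: A_def)
        with assms(2) show False ..
      qed
    qed
    moreover have "w \<in> A i - A k"
      using w(1) wi k(2) by (simp add: A_def)
    moreover have "finite (A i)"
      using assms(1) by (simp add: A_def Dset_def)
    ultimately have "card (A k) < card (A i)"
      by (metis Diff_iff psubsetI psubset_card_mono)
    with fewest[OF k(1)] show False by simp
  qed
  with i show ?thesis by blast
qed

lemma minimal_generating_set_through_private_coordinate:
  assumes "v \<in> Dset V p" "v $ i = p $ i"
    and "\<And>j. v $ j < p $ j \<Longrightarrow> \<exists>c\<in>Dset V p. c $ j = p $ j \<and> c $ i < p $ i"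
  shows "\<exists>G. minimal_generating_set V p G \<and> v \<in> G"
proof -
  obtain c where c: "\<And>j. v $ j < p $ j \<Longrightarrow> c j \<in> Dset V p \<and> c j $ j = p $ j \<and> c j $ i < p $ i"
    using assms(3) by metis
  define G0 where "G0 = insert v (c ` {j. v $ j < p $ j})"
  have G0_D: "G0 \<subseteq> Dset V p"
    using assms(1) c by (auto simp: G0_def)
  have finite_G0: "finite G0"
    by (simp add: G0_def)
  have "\<exists>g\<in>G0. g $ k = p $ k" for k
  proof (cases "v $ k < p $ k")
    case True then show ?thesis using c[OF True] by (auto simp: G0_def)
  next
    case False then show ?thesis
      using assms(1) by (auto simp: G0_def Dset_def dom_le_def intro!: order.antisym)
  qed
  then have "generating_set V p G0"
    using join_eq_iff_tight[OF finite_G0] G0_D by (auto simp: generating_set_def G0_def Dset_def)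
  then obtain G where G: "G \<subseteq> G0" "minimal_generating_set V p G"
    using generating_set_contains_minimal[OF finite_G0] by blast
  then have "\<exists>g\<in>G. g $ i = p $ i"
    using join_eq_iff_tight[of G p] finite_G0 G0_D
    by (auto simp: minimal_generating_set_def generating_set_def Dset_def dest: finite_subset)
  moreover have "g = v" if "g \<in> G0" "g $ i = p $ i" for g
    using that by (auto simp: G0_def dest: c)
  ultimately show ?thesis using G by blast
qed

theorem corollary4p9:
  fixes V :: "(real ^ 'd) set" and p v :: "real ^ 'd"
  assumes "finite V" and "antichain V" and "\<not> degenerate V"
    and "characteristic_point V p"
    and "v \<in> Dset V p"
  shows "\<exists>G. minimal_generating_set V p G \<and> v \<in> G"
proof -
  obtain i where "v $ i = p $ i"
    and "\<And>j. v $ j < p $ j \<Longrightarrow> \<exists>c\<in>Dset V p. c $ j = p $ j \<and> c $ i < p $ i"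
    using nondegenerate_private_coordinate[OF assms(1,3,4,5)] by blast
  then show ?thesis
    using minimal_generating_set_through_private_coordinate[OF assms(5)] by blast
qed

end
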